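(* For every $n\in\mathbb{N}$ there is a constant $c=c(n,\alpha,C_1)$ such that for every $\delta\in(0,\delta_0]$ and $t>0$, $$\int_{\mathbb{R}^n}e^{-t\psi^{(\delta)}(|\xi|)}d\xi\le c\,e^{h(\delta)t}\frac{1}{\big(h^{-1}(1/t)\big)^n}.$$
   Context: Let $\nu$ be a symmetric density of an infinite Lévy measure on $\mathbb{R}$ (with $\int(x^2\wedge1)\nu<\infty$), such that for some $\eta_4>0$, $\nu\in C^1(0,\eta_4)$, $\nu'<0$ and $-\nu'(x)/x$ decreasing on $(0,\eta_4)$. Let $\psi(\xi)=\int(1-\cos(\xi x))\nu(x)dx$ satisfy $\psi(\lambda\theta)\ge\underline{C}\lambda^\alpha\psi(\theta)$ for $\lambda\ge1,\theta\ge0$ and $\psi(\lambda\theta)\le\overline{C}\lambda^\beta\psi(\theta)$ for $\lambda\ge1,\theta\ge1$, with $0<\alpha\le\beta<2$. Put $C_1=\underline{C}/\pi^2$; $h(r)=\int(1\wedge x^2r^{-2})\nu(x)dx$ for $r>0$ (continuous, strictly decreasing from $\infty$ to $0$), $h^{-1}$ its inverse. Truncation: there is $\delta_0\in(0,1/24]$ such that for each $\delta\in(0,\delta_0]$ one fixes $\mu^{(\delta)}:\mathbb{R}\setminus\{0\}\to[0,\infty)$ with $\mu^{(\delta)}=\nu$ on $(0,\delta]$, $\mu^{(\delta)}\in[0,\nu]$ on $(\delta,2\delta)$, $\mu^{(\delta)}=0$ on $[2\delta,\infty)$, $\mu^{(\delta)}\in C^1(0,\infty)$, nonincreasing on $(0,\infty)$,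 $-(\mu^{(\delta)})'(x)/x$ nonincreasing, and symmetric. $\psi^{(\delta)}(\xi)=\int(1-\cos(\xi x))\mu^{(\delta)}(x)dx$. *)

theory Defs
  imports "HOL-Analysis.Analysis"
begin

definition levy_exp :: "(real \<Rightarrow> real) \<Rightarrow> real \<Rightarrow> real" where
  "levy_exp f \<xi> = (\<integral>x. (1 - cos (\<xi> * x)) * f x \<partial>lborel)"

definition levy_h :: "(real \<Rightarrow> real) \<Rightarrow> real \<Rightarrow> real" where
  "levy_h f r = (\<integral>x. min 1 (x\<^sup>2 / r\<^sup>2) * f x \<partial>lborel)"

text \<open>Inverse of h on (0,oo) (h is a continuous strictly decreasing bijection
  (0,oo) -> (0,oo) under the standing assumptions).\<close>
definition levy_h_inv :: "(real \<Rightarrow> real) \<Rightarrow> real \<Rightarrow> real" where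
  "levy_h_inv f s = (THE r. 0 < r \<and> levy_h f r = s)"

definition std_levy_assms ::
  "(real \<Rightarrow> real) \<Rightarrow> real \<Rightarrow> real \<Rightarrow> real \<Rightarrow> real \<Rightarrow> real \<Rightarrow> bool" where
  "std_levy_assms \<nu> \<eta>4 \<alpha> \<beta> Cl Cu \<longleftrightarrow>
     \<nu> \<in> borel_measurable borel \<and>
     (\<forall>x. 0 \<le> \<nu> x) \<and>
     (\<forall>x. \<nu> (- x) = \<nu> x) \<and>
     (\<integral>\<^sup>+ x. ennreal (min (x\<^sup>2) 1 * \<nu> x) \<partial>lborel) < \<infinity> \<and>
     (\<integral>\<^sup>+ x. ennreal (\<nu> x) \<partial>lborel) = \<infinity> \<and>
     0 < \<eta>4 \<and>
     (\<forall>x\<in>{0<..<\<eta>4}. \<nu> differentiable at x) \<and>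
     continuous_on {0<..<\<eta>4} (deriv \<nu>) \<and>
     (\<forall>x\<in>{0<..<\<eta>4}. deriv \<nu> x < 0) \<and>
     (\<forall>x\<in>{0<..<\<eta>4}. \<forall>y\<in>{0<..<\<eta>4}. x \<le> y \<longrightarrow>
         - deriv \<nu> y / y \<le> - deriv \<nu> x / x) \<and>
     0 < \<alpha> \<and> \<alpha> \<le> \<beta> \<and> \<beta> < 2 \<and> 0 < Cl \<and> 0 < Cu \<and>
     (\<forall>l \<theta>. 1 \<le> l \<longrightarrow> 0 \<le> \<theta> \<longrightarrow>
         levy_exp \<nu> (l * \<theta>) \<ge> Cl * l powr \<alpha> * levy_exp \<nu> \<theta>) \<and>
     (\<forall>l \<theta>. 1 \<le> l \<longrightarrow> 1 \<le> \<theta> \<longrightarrow>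
         levy_exp \<nu> (l * \<theta>) \<le> Cu * l powr \<beta> * levy_exp \<nu> \<theta>)"

definition truncation_family ::
  "(real \<Rightarrow> real) \<Rightarrow> real \<Rightarrow> (real \<Rightarrow> real \<Rightarrow> real) \<Rightarrow> bool" where
  "truncation_family \<nu> \<delta>0 \<mu> \<longleftrightarrow>
     0 < \<delta>0 \<and> \<delta>0 \<le> 1/24 \<and>
     (\<forall>\<delta>\<in>{0<..\<delta>0}.
        (\<forall>x\<in>{0<..\<delta>}. \<mu> \<delta> x = \<nu> x) \<and>
        (\<forall>x\<in>{\<delta><..<2*\<delta>}. 0 \<le> \<mu> \<delta> x \<and> \<mu> \<delta> x \<le> \<nu> x) \<and>
        (\<forall>x\<in>{2*\<delta>..}. \<mu> \<delta> x = 0) \<and>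
        (\<forall>x\<in>{0<..}. \<mu> \<delta> differentiable at x) \<and>
        continuous_on {0<..} (deriv (\<mu> \<delta>)) \<and>
        (\<forall>x\<in>{0<..}. \<forall>y\<in>{0<..}. x \<le> y \<longrightarrow> \<mu> \<delta> y \<le> \<mu> \<delta> x) \<and>
        (\<forall>x\<in>{0<..}. \<forall>y\<in>{0<..}. x \<le> y \<longrightarrow>
            - deriv (\<mu> \<delta>) y / y \<le> - deriv (\<mu> \<delta>) x / x) \<and>
        (\<forall>x. x \<noteq> 0 \<longrightarrow> \<mu> \<delta> (- x) = \<mu> \<delta> x))"

end

theory Submission
  imports Defs "HOL-Probability.Sinc_Integral"
begin

text \<open>
  Put \<open>r = h\<^sup>-\<^sup>1(1/t)\<close>. Splitting \<open>min(1, v\<^sup>2)\<close> dyadically into the terms \<open>1 - cos(v/2^k)\<close>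
  and summing the lower scaling of \<open>\<psi>\<close> along the scales \<open>\<xi>/2^k\<close> gives \<open>h(1/\<xi>) \<le> A \<psi>(\<xi>)\<close>,
  where \<open>A\<close> depends only on \<open>\<alpha>\<close> and \<open>C\<^sub>l\<close>. Together with lower scaling this yields
  \<open>t \<psi>(\<rho>) \<ge> K (\<rho> r)^\<alpha> - K\<close> for \<open>K = C\<^sub>l / A\<close>. Truncation at \<open>\<delta>\<close> lowers \<open>\<psi>\<close> by at
  most \<open>2 h(\<delta>)\<close>, and since the truncated exponent is nonnegative, halving the exponent absorbs
  the factor 2: \<open>exp(-t \<psi>\<^sup>(\<^sup>\<delta>\<^sup>)(\<rho>)) \<le> exp(t h(\<delta>) + K) exp(-K (\<rho> r)^\<alpha> / 2)\<close>. The substitution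
  \<open>\<eta> = r \<xi>\<close> turns the integral of the last factor into \<open>r^-n\<close> times a constant depending only
  on \<open>n\<close>, \<open>\<alpha>\<close> and \<open>C\<^sub>l\<close>.
\<close>

lemma one_minus_cos_le_min_sq:
  fixes v :: real
  shows "1 - cos v \<le> 2 * min 1 (v\<^sup>2)"
proof -
  have "1 - cos v = 2 * (sin (v / 2))\<^sup>2"
    using cos_double_sin[of "v / 2"] by simp
  also have "\<dots> \<le> 2 * (v / 2)\<^sup>2"
    using abs_le_square_iff[THEN iffD1, OF abs_sin_x_le_abs_x[of "v / 2"]] by simp
  finally have "1 - cos v \<le> v\<^sup>2 / 2"
    by (simp add: power_divide)
  then have "1 - cos v \<le> 2 * v\<^sup>2"
    using zero_le_power2[of v] by linarith
  moreover have "1 - cos v \<le> 2"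
    using cos_ge_minus_one[of v] by simp
  ultimately show ?thesis
    by (simp add: min_def)
qed

lemma one_minus_cos_ge_quarter_sq:
  fixes v :: real
  assumes "\<bar>v\<bar> \<le> 1"
  shows "v\<^sup>2 / 4 \<le> 1 - cos v"
proof -
  obtain t where taylor:
    "cos v = (\<Sum>m<4. cos_coeff m * v ^ m) + cos (t + 1/2 * real 4 * pi) / fact 4 * v ^ 4"
    using Maclaurin_cos_expansion by blast
  have "(\<Sum>m<4. cos_coeff m * v ^ m) = 1 - v\<^sup>2 / 2"
    by (simp add: cos_coeff_def lessThan_nat_numeral fact_numeral power2_eq_square)
  moreover have "cos (t + 1/2 * real 4 * pi) / fact 4 * v ^ 4 \<le> v ^ 4 / 24"
    using mult_right_mono[OF cos_le_one zero_le_even_power[of 4 v]]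
    by (simp add: fact_numeral divide_right_mono)
  moreover have "v ^ 4 \<le> v\<^sup>2"
    using power_decreasing[of 2 4 "\<bar>v\<bar>"] assms by simp
  ultimately show ?thesis
    using taylor zero_le_power2[of v] by linarith
qed

lemma dyadic_rescaling_exists:
  fixes v :: real
  shows "\<exists>k. \<bar>v / 2 ^ k\<bar> \<le> 1 \<and> min 1 (v\<^sup>2) \<le> 4 * (v / 2 ^ k)\<^sup>2"
proof -
  obtain n :: nat where "\<bar>v\<bar> \<le> 2 ^ n"
    using real_arch_pow[of 2 "\<bar>v\<bar>"] by (auto intro: less_imp_le)
  then show ?thesis
  proof (induction n)
    case 0
    have "v\<^sup>2 \<le> 4 * v\<^sup>2"
      using zero_le_power2[of v] by linarith
    then have "min 1 (v\<^sup>2) \<le> 4 * (v / 2 ^ 0)\<^sup>2"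
      by (simp add: min.coboundedI2)
    with 0 show ?case
      by (intro exI[of _ 0]) simp
  next
    case (Suc n)
    show ?case
    proof (cases "\<bar>v\<bar> \<le> 2 ^ n")
      case True
      then show ?thesis
        by (rule Suc.IH)
    next
      case False
      define w where "w = v / 2 ^ Suc n"
      have "\<bar>w\<bar> = \<bar>v\<bar> / (2 * 2 ^ n)"
        by (simp add: w_def abs_divide)
      then have w: "1 / 2 \<le> \<bar>w\<bar>" "\<bar>w\<bar> \<le> 1"
        using False Suc.prems by (simp_all add: le_divide_eq divide_le_eq)
      then have "(1 / 2)\<^sup>2 \<le> w\<^sup>2"
        using abs_le_square_iff[of "1 / 2" w] by simp
      then have "1 \<le> 4 * w\<^sup>2"
        by (simp add: power_divide)
      then have "min 1 (v\<^sup>2) \<le> 4 * w\<^sup>2"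
        by (rule min.coboundedI1)
      with w(2) show ?thesis
        unfolding w_def by blast
    qed
  qed
qed

lemma min_one_sq_le_dyadic_sum:
  fixes v :: real
  shows "ennreal (min 1 (v\<^sup>2)) \<le> 16 * (\<Sum>k. ennreal (1 - cos (v / 2 ^ k)))"
proof -
  obtain k where k: "\<bar>v / 2 ^ k\<bar> \<le> 1" "min 1 (v\<^sup>2) \<le> 4 * (v / 2 ^ k)\<^sup>2"
    using dyadic_rescaling_exists by blast
  have bound: "4 * (v / 2 ^ k)\<^sup>2 \<le> 16 * (1 - cos (v / 2 ^ k))"
    using one_minus_cos_ge_quarter_sq[OF k(1)] by simp
  have "ennreal (min 1 (v\<^sup>2)) \<le> ennreal (16 * (1 - cos (v / 2 ^ k)))"
    using order_trans[OF k(2) bound] by (rule ennreal_leI)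
  also have "\<dots> = 16 * ennreal (1 - cos (v / 2 ^ k))"
    by (rule numeral_mult_ennreal[symmetric]) simp
  also have "\<dots> \<le> 16 * (\<Sum>i. ennreal (1 - cos (v / 2 ^ i)))"
  proof (rule mult_left_mono)
    have "ennreal (1 - cos (v / 2 ^ k)) = (\<Sum>i\<in>{k}. ennreal (1 - cos (v / 2 ^ i)))"
      by simp
    also have "\<dots> \<le> (\<Sum>i. ennreal (1 - cos (v / 2 ^ i)))"
      by (rule sum_le_suminf) (simp_all add: summableI)
    finally show "ennreal (1 - cos (v / 2 ^ k)) \<le> (\<Sum>i. ennreal (1 - cos (v / 2 ^ i)))" .
  qed simp
  finally show ?thesis .
qed

lemma min_one_mult_le:
  fixes a b :: real
  assumes "0 \<le> a" "0 \<le> b"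
  shows "min 1 (a * b) \<le> max 1 a * min 1 b"
proof (cases "b \<le> 1")
  case True
  then show ?thesis
    using mult_right_mono[of a "max 1 a" b] assms by (simp add: min_def)
qed simp

lemma levy_exp_nonneg:
  assumes "\<And>x. x \<noteq> 0 \<Longrightarrow> 0 \<le> f x"
  shows "0 \<le> levy_exp f \<xi>"
  unfolding levy_exp_def
proof (rule integral_nonneg_AE)
  show "AE x in lborel. 0 \<le> (1 - cos (\<xi> * x)) * f x"
    using AE_lborel_singleton[of 0] by eventually_elim (simp add: assms)
qed

locale levy_density =
  fixes \<nu> :: "real \<Rightarrow> real"
  assumes borel_measurable_density [measurable]: "\<nu> \<in> borel_measurable borel"
    and density_nonneg: "\<And>x. 0 \<le> \<nu> x"
    and levy_integrable: "(\<integral>\<^sup>+ x. ennreal (min (x\<^sup>2) 1 * \<nu> x) \<partial>lborel) < \<infinity>"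
begin

lemma integrable_mult_density:
  assumes [measurable]: "g \<in> borel_measurable borel"
    and g_nonneg: "\<And>x. 0 \<le> g x" and g_le: "\<And>x. g x \<le> C * min 1 (x\<^sup>2)"
  shows "integrable lborel (\<lambda>x. g x * \<nu> x)"
proof -
  have "integrable lborel (\<lambda>x. min (x\<^sup>2) 1 * \<nu> x)"
    using levy_integrable by (intro integrableI_nonneg) (auto simp: density_nonneg)
  then have integrable: "integrable lborel (\<lambda>x. C * (min (x\<^sup>2) 1 * \<nu> x))"
    by (rule integrable_mult_right)
  have bound: "norm (g x * \<nu> x) \<le> norm (C * (min (x\<^sup>2) 1 * \<nu> x))" for x
  proof -
    have "g x * \<nu> x \<le> C * min 1 (x\<^sup>2) * \<nu> x"
      using g_le density_nonneg by (rule mult_right_mono)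
    then show ?thesis
      using g_nonneg[of x] density_nonneg[of x] abs_ge_self[of "C * (min (x\<^sup>2) 1 * \<nu> x)"]
      by (simp add: min.commute mult.assoc)
  qed
  show ?thesis
    by (rule Bochner_Integration.integrable_bound[OF integrable _ AE_I2[OF bound]]) simp
qed

lemma integrable_levy_exp: "integrable lborel (\<lambda>x. (1 - cos (\<xi> * x)) * \<nu> x)"
proof (rule integrable_mult_density)
  fix x
  have "1 - cos (\<xi> * x) \<le> 2 * min 1 (\<xi>\<^sup>2 * x\<^sup>2)"
    using one_minus_cos_le_min_sq[of "\<xi> * x"] by (simp add: power_mult_distrib)
  also have "\<dots> \<le> 2 * (max 1 (\<xi>\<^sup>2) * min 1 (x\<^sup>2))"
    using min_one_mult_le[of "\<xi>\<^sup>2" "x\<^sup>2"] by simp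
  finally show "1 - cos (\<xi> * x) \<le> 2 * max 1 (\<xi>\<^sup>2) * min 1 (x\<^sup>2)"
    by simp
qed auto

lemma integrable_levy_h:
  assumes "0 < r"
  shows "integrable lborel (\<lambda>x. min 1 (x\<^sup>2 / r\<^sup>2) * \<nu> x)"
proof (rule integrable_mult_density)
  fix x
  show "min 1 (x\<^sup>2 / r\<^sup>2) \<le> max 1 (1 / r\<^sup>2) * min 1 (x\<^sup>2)"
    using min_one_mult_le[of "1 / r\<^sup>2" "x\<^sup>2"] by simp
qed auto

lemma levy_h_nonneg: "0 \<le> levy_h \<nu> r"
  unfolding levy_h_def by (rule integral_nonneg_AE) (simp add: density_nonneg)

lemma ennreal_levy_exp:
  "ennreal (levy_exp \<nu> \<xi>) = (\<integral>\<^sup>+ x. ennreal ((1 - cos (\<xi> * x)) * \<nu> x) \<partial>lborel)"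
  unfolding levy_exp_def
  by (rule nn_integral_eq_integral[symmetric, OF integrable_levy_exp]) (simp add: density_nonneg)

lemma ennreal_levy_h:
  assumes "0 < r"
  shows "ennreal (levy_h \<nu> r) = (\<integral>\<^sup>+ x. ennreal (min 1 (x\<^sup>2 / r\<^sup>2) * \<nu> x) \<partial>lborel)"
  unfolding levy_h_def
  by (rule nn_integral_eq_integral[symmetric, OF integrable_levy_h[OF assms]]) (simp add: density_nonneg)

lemma levy_exp_le_levy_h:
  assumes "0 < \<xi>"
  shows "levy_exp \<nu> \<xi> \<le> 2 * levy_h \<nu> (1 / \<xi>)"
proof -
  have "levy_exp \<nu> \<xi> \<le> (\<integral>x. 2 * (min 1 (x\<^sup>2 / (1 / \<xi>)\<^sup>2) * \<nu> x) \<partial>lborel)"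
    unfolding levy_exp_def
  proof (rule integral_mono[OF integrable_levy_exp])
    show "integrable lborel (\<lambda>x. 2 * (min 1 (x\<^sup>2 / (1 / \<xi>)\<^sup>2) * \<nu> x))"
      using assms by (intro integrable_mult_right integrable_levy_h) simp
    fix x
    have "x\<^sup>2 / (1 / \<xi>)\<^sup>2 = (\<xi> * x)\<^sup>2"
      using assms by (simp add: field_simps)
    then have bound: "1 - cos (\<xi> * x) \<le> 2 * min 1 (x\<^sup>2 / (1 / \<xi>)\<^sup>2)"
      using one_minus_cos_le_min_sq[of "\<xi> * x"] by simp
    show "(1 - cos (\<xi> * x)) * \<nu> x \<le> 2 * (min 1 (x\<^sup>2 / (1 / \<xi>)\<^sup>2) * \<nu> x)"
      using mult_right_mono[OF bound density_nonneg[of x]] by (simp add: mult.assoc)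
  qed
  also have "\<dots> = 2 * levy_h \<nu> (1 / \<xi>)"
    unfolding levy_h_def by simp
  finally show ?thesis .
qed

lemma levy_h_antimono:
  assumes "0 < r1" "r1 \<le> r2"
  shows "levy_h \<nu> r2 \<le> levy_h \<nu> r1"
  unfolding levy_h_def
proof (rule integral_mono[OF integrable_levy_h integrable_levy_h])
  fix x
  have "x\<^sup>2 / r2\<^sup>2 \<le> x\<^sup>2 / r1\<^sup>2"
    using assms by (intro divide_left_mono power_mono mult_pos_pos) auto
  then show "min 1 (x\<^sup>2 / r2\<^sup>2) * \<nu> x \<le> min 1 (x\<^sup>2 / r1\<^sup>2) * \<nu> x"
    by (intro mult_right_mono density_nonneg) simp
qed (use assms in auto)

lemma levy_h_le_sq_ratio:
  assumes "0 < r1" "r1 \<le> r2"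
  shows "levy_h \<nu> r1 \<le> (r2 / r1)\<^sup>2 * levy_h \<nu> r2"
proof -
  have ratio: "1 \<le> (r2 / r1)\<^sup>2"
    using assms by (simp add: field_simps power_mono)
  have "levy_h \<nu> r1 \<le> (\<integral>x. (r2 / r1)\<^sup>2 * (min 1 (x\<^sup>2 / r2\<^sup>2) * \<nu> x) \<partial>lborel)"
    unfolding levy_h_def
  proof (rule integral_mono[OF integrable_levy_h])
    show "integrable lborel (\<lambda>x. (r2 / r1)\<^sup>2 * (min 1 (x\<^sup>2 / r2\<^sup>2) * \<nu> x))"
      using assms by (intro integrable_mult_right integrable_levy_h) auto
    fix x
    have "x\<^sup>2 / r1\<^sup>2 = (r2 / r1)\<^sup>2 * (x\<^sup>2 / r2\<^sup>2)"
      using assms by (simp add: field_simps)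
    then have bound: "min 1 (x\<^sup>2 / r1\<^sup>2) \<le> (r2 / r1)\<^sup>2 * min 1 (x\<^sup>2 / r2\<^sup>2)"
      using min_one_mult_le[of "(r2 / r1)\<^sup>2" "x\<^sup>2 / r2\<^sup>2"] ratio by simp
    show "min 1 (x\<^sup>2 / r1\<^sup>2) * \<nu> x \<le> (r2 / r1)\<^sup>2 * (min 1 (x\<^sup>2 / r2\<^sup>2) * \<nu> x)"
      using mult_right_mono[OF bound density_nonneg[of x]] by (simp add: mult.assoc)
  qed (use assms in auto)
  also have "\<dots> = (r2 / r1)\<^sup>2 * levy_h \<nu> r2"
    unfolding levy_h_def by simp
  finally show ?thesis .
qed

lemma isCont_levy_h:
  assumes "0 < r"
  shows "isCont (levy_h \<nu>) r"
proof -
  let ?lo = "\<lambda>s. min 1 ((r / s)\<^sup>2) * levy_h \<nu> r"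
  let ?hi = "\<lambda>s. max 1 ((r / s)\<^sup>2) * levy_h \<nu> r"
  have bounds: "?lo s \<le> levy_h \<nu> s \<and> levy_h \<nu> s \<le> ?hi s" if "0 < s" for s
  proof (cases "s \<le> r")
    case True
    then have "1 \<le> (r / s)\<^sup>2"
      using that by (simp add: one_le_power)
    then show ?thesis
      using levy_h_le_sq_ratio[OF that True] levy_h_antimono[OF that True] by simp
  next
    case False
    then have ratio: "(r / s)\<^sup>2 \<le> 1"
      using assms that by (simp add: power_le_one)
    have "(r / s)\<^sup>2 * levy_h \<nu> r \<le> (r / s)\<^sup>2 * ((s / r)\<^sup>2 * levy_h \<nu> s)"
      using levy_h_le_sq_ratio[of r s] assms False by (simp add: mult_left_mono)
    also have "\<dots> = levy_h \<nu> s"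
      using assms that by (simp add: power_divide)
    finally show ?thesis
      using ratio levy_h_antimono[of r s] assms False by simp
  qed
  have "eventually (\<lambda>s. 0 < s) (at r)"
    using order_tendstoD(1)[OF tendsto_ident_at assms] .
  then have "eventually (\<lambda>s. ?lo s \<le> levy_h \<nu> s) (at r)"
      and "eventually (\<lambda>s. levy_h \<nu> s \<le> ?hi s) (at r)"
    by (auto elim!: eventually_mono dest: bounds)
  moreover have "(?lo \<longlongrightarrow> levy_h \<nu> r) (at r)" and "(?hi \<longlongrightarrow> levy_h \<nu> r) (at r)"
    using assms by (auto intro!: tendsto_eq_intros)
  ultimately show ?thesis
    unfolding isCont_def by (rule tendsto_sandwich)
qed

lemma levy_h_le_dyadic_sum:
  assumes "0 < \<xi>"
  shows "ennreal (levy_h \<nu> (1 / \<xi>)) \<le> 16 * (\<Sum>k. ennreal (levy_exp \<nu> (\<xi> / 2 ^ k)))"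
proof -
  have "x\<^sup>2 / (1 / \<xi>)\<^sup>2 = (\<xi> * x)\<^sup>2" for x
    using assms by (simp add: field_simps)
  then have "ennreal (levy_h \<nu> (1 / \<xi>)) = (\<integral>\<^sup>+ x. ennreal (min 1 ((\<xi> * x)\<^sup>2)) * ennreal (\<nu> x) \<partial>lborel)"
    using assms by (simp add: ennreal_levy_h ennreal_mult density_nonneg)
  also have "\<dots> \<le> (\<integral>\<^sup>+ x. 16 * (\<Sum>k. ennreal (1 - cos (\<xi> * x / 2 ^ k))) * ennreal (\<nu> x) \<partial>lborel)"
    by (intro nn_integral_mono mult_right_mono min_one_sq_le_dyadic_sum) auto
  also have "\<dots> = (\<integral>\<^sup>+ x. (\<Sum>k. 16 * ennreal ((1 - cos (\<xi> / 2 ^ k * x)) * \<nu> x)) \<partial>lborel)"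
  proof (intro nn_integral_cong)
    fix x
    have "16 * ennreal ((1 - cos (\<xi> / 2 ^ k * x)) * \<nu> x)
        = 16 * ennreal (1 - cos (\<xi> * x / 2 ^ k)) * ennreal (\<nu> x)" for k
      using ennreal_mult[of "1 - cos (\<xi> * x / 2 ^ k)" "\<nu> x"] density_nonneg[of x]
      by (simp only: times_divide_eq_left mult.assoc) simp
    then show "16 * (\<Sum>k. ennreal (1 - cos (\<xi> * x / 2 ^ k))) * ennreal (\<nu> x)
        = (\<Sum>k. 16 * ennreal ((1 - cos (\<xi> / 2 ^ k * x)) * \<nu> x))"
      by (simp only: ennreal_suminf_multc ennreal_suminf_cmult)
  qed
  also have "\<dots> = (\<Sum>k. \<integral>\<^sup>+ x. 16 * ennreal ((1 - cos (\<xi> / 2 ^ k * x)) * \<nu> x) \<partial>lborel)"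
    by (rule nn_integral_suminf) simp
  also have "\<dots> = 16 * (\<Sum>k. ennreal (levy_exp \<nu> (\<xi> / 2 ^ k)))"
    by (simp add: nn_integral_cmult ennreal_levy_exp)
  finally show ?thesis .
qed

end

locale infinite_levy_density = levy_density +
  assumes infinite_mass: "(\<integral>\<^sup>+ x. ennreal (\<nu> x) \<partial>lborel) = \<infinity>"
begin

lemma not_AE_vanishing_near_0:
  assumes "0 < \<rho>"
  shows "\<not> (AE x in lborel. \<bar>x\<bar> < \<rho> \<longrightarrow> \<nu> x = 0)"
proof
  assume vanishing: "AE x in lborel. \<bar>x\<bar> < \<rho> \<longrightarrow> \<nu> x = 0"
  define M where "M = 1 / min (\<rho>\<^sup>2) 1"
  have M_pos: "0 < M"
    using assms by (simp add: M_def)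
  have "AE x in lborel. ennreal (\<nu> x) \<le> ennreal M * ennreal (min (x\<^sup>2) 1 * \<nu> x)"
    using vanishing
  proof eventually_elim
    case (elim x)
    show ?case
    proof (cases "\<bar>x\<bar> < \<rho>")
      case False
      then have "\<rho>\<^sup>2 \<le> x\<^sup>2"
        using assms power_mono[of \<rho> "\<bar>x\<bar>" 2] by simp
      then have "1 \<le> M * min (x\<^sup>2) 1"
        using assms by (auto simp: M_def field_simps min_def)
      then have "\<nu> x \<le> M * (min (x\<^sup>2) 1 * \<nu> x)"
        using mult_right_mono[of 1 "M * min (x\<^sup>2) 1" "\<nu> x"] density_nonneg[of x] by (simp add: mult.assoc)
      then show ?thesis
        using M_pos by (simp add: ennreal_mult'[symmetric] ennreal_leI)
    qed (use elim in simp)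
  qed
  then have "(\<integral>\<^sup>+ x. ennreal (\<nu> x) \<partial>lborel) \<le> (\<integral>\<^sup>+ x. ennreal M * ennreal (min (x\<^sup>2) 1 * \<nu> x) \<partial>lborel)"
    by (rule nn_integral_mono_AE)
  also have "\<dots> = ennreal M * (\<integral>\<^sup>+ x. ennreal (min (x\<^sup>2) 1 * \<nu> x) \<partial>lborel)"
    by (rule nn_integral_cmult) auto
  also have "\<dots> < \<infinity>"
    using levy_integrable by (simp add: ennreal_mult_less_top)
  finally show False
    using infinite_mass by simp
qed

lemma integral_mult_density_pos:
  assumes [measurable]: "D \<in> borel_measurable borel"
    and D_nonneg: "\<And>x. 0 \<le> D x" and "0 < \<rho>"
    and D_pos: "\<And>x. x \<noteq> 0 \<Longrightarrow> \<bar>x\<bar> < \<rho> \<Longrightarrow> 0 < D x"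
    and integrable: "integrable lborel (\<lambda>x. D x * \<nu> x)"
  shows "0 < (\<integral>x. D x * \<nu> x \<partial>lborel)"
proof -
  have "(\<integral>x. D x * \<nu> x \<partial>lborel) \<noteq> 0"
  proof
    assume "(\<integral>x. D x * \<nu> x \<partial>lborel) = 0"
    then have "AE x in lborel. D x * \<nu> x = 0"
      using integral_nonneg_eq_0_iff_AE[OF integrable] D_nonneg density_nonneg by simp
    then have "AE x in lborel. \<bar>x\<bar> < \<rho> \<longrightarrow> \<nu> x = 0"
      using AE_lborel_singleton[of 0] by eventually_elim (use D_pos in fastforce)
    then show False
      using not_AE_vanishing_near_0[OF \<open>0 < \<rho>\<close>] by simp
  qed
  moreover have "0 \<le> (\<integral>x. D x * \<nu> x \<partial>lborel)"
    by (intro integral_nonneg_AE) (simp add: D_nonneg density_nonneg)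
  ultimately show ?thesis
    by simp
qed

lemma levy_h_strict_antimono:
  assumes "0 < r1" "r1 < r2"
  shows "levy_h \<nu> r2 < levy_h \<nu> r1"
proof -
  define D where "D x = min 1 (x\<^sup>2 / r1\<^sup>2) - min 1 (x\<^sup>2 / r2\<^sup>2)" for x
  have sq_less: "r1\<^sup>2 < r2\<^sup>2"
    using assms by (intro power_strict_mono) auto
  have "0 < (\<integral>x. D x * \<nu> x \<partial>lborel)"
  proof (rule integral_mult_density_pos)
    show "0 \<le> D x" for x
      using sq_less assms unfolding D_def
      by (simp add: divide_left_mono min.coboundedI2)
    show "0 < D x" if "x \<noteq> 0" "\<bar>x\<bar> < r2" for x
    proof -
      have "x\<^sup>2 / r2\<^sup>2 < x\<^sup>2 / r1\<^sup>2"
        using sq_less assms that by (intro divide_strict_left_mono) auto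
      moreover have "x\<^sup>2 < r2\<^sup>2"
        using power_strict_mono[of "\<bar>x\<bar>" r2 2] that by simp
      then have "x\<^sup>2 / r2\<^sup>2 < 1"
        using assms by simp
      ultimately show ?thesis
        unfolding D_def by (simp add: min_def)
    qed
    show "integrable lborel (\<lambda>x. D x * \<nu> x)"
      unfolding D_def left_diff_distrib
      using assms by (intro Bochner_Integration.integrable_diff integrable_levy_h) auto
    show "D \<in> borel_measurable borel"
      unfolding D_def by measurable
    show "0 < r2"
      using assms by simp
  qed
  also have "(\<integral>x. D x * \<nu> x \<partial>lborel) = levy_h \<nu> r1 - levy_h \<nu> r2"
    unfolding D_def left_diff_distrib levy_h_def
    using assms by (intro Bochner_Integration.integral_diff integrable_levy_h) auto
  finally show ?thesis
    by simp
qed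

lemma levy_exp_pos:
  assumes "0 < \<xi>"
  shows "0 < levy_exp \<nu> \<xi>"
  unfolding levy_exp_def
proof (rule integral_mult_density_pos[where \<rho> = "pi / \<xi>"])
  show "0 < 1 - cos (\<xi> * x)" if "x \<noteq> 0" "\<bar>x\<bar> < pi / \<xi>" for x
  proof -
    have "\<bar>\<xi> * x\<bar> < pi"
      using that assms by (simp add: abs_mult field_simps)
    then have "cos \<bar>\<xi> * x\<bar> < cos 0"
      using that assms by (intro cos_monotone_0_pi) auto
    then show ?thesis
      by simp
  qed
  show "(\<lambda>x. 1 - cos (\<xi> * x)) \<in> borel_measurable borel"
    by measurable
  show "0 \<le> 1 - cos (\<xi> * x)" for x
    by simp
  show "0 < pi / \<xi>"
    using assms by simp
  show "integrable lborel (\<lambda>x. (1 - cos (\<xi> * x)) * \<nu> x)"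
    by (rule integrable_levy_exp)
qed

end

text \<open>The factor 16 comes from \<open>min(1, v\<^sup>2) \<le> 16 \<Sum>\<^sub>k (1 - cos(v/2^k))\<close>, the factor
  \<open>1 / (C\<^sub>l (1 - 2^-\<alpha>))\<close> from summing the lower scaling over the dyadic scales.\<close>

definition levy_h_psi_const :: "real \<Rightarrow> real \<Rightarrow> real" where
  "levy_h_psi_const \<alpha> Cl = 16 / (Cl * (1 - 2 powr - \<alpha>))"

locale lower_scaling_levy_density = levy_density +
  fixes \<alpha> Cl :: real
  assumes alpha_pos: "0 < \<alpha>" and Cl_pos: "0 < Cl"
    and lower_scaling:
      "\<And>l \<theta>. 1 \<le> l \<Longrightarrow> 0 \<le> \<theta> \<Longrightarrow> Cl * l powr \<alpha> * levy_exp \<nu> \<theta> \<le> levy_exp \<nu> (l * \<theta>)"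
begin

lemma levy_h_psi_const_pos: "0 < levy_h_psi_const \<alpha> Cl"
  using alpha_pos Cl_pos by (simp add: levy_h_psi_const_def powr_less_one)

lemma levy_exp_div_pow2:
  assumes "0 \<le> \<xi>"
  shows "levy_exp \<nu> (\<xi> / 2 ^ k) \<le> levy_exp \<nu> \<xi> / Cl * (2 powr - \<alpha>) ^ k"
proof -
  have cancel: "(2 ^ k) powr \<alpha> * (2 powr - \<alpha>) ^ k = (1::real)"
    by (simp add: powr_realpow[symmetric] powr_powr powr_power powr_add[symmetric])
  have "Cl * (2 ^ k) powr \<alpha> * levy_exp \<nu> (\<xi> / 2 ^ k) \<le> levy_exp \<nu> \<xi>"
    using lower_scaling[of "2 ^ k" "\<xi> / 2 ^ k"] assms by simp
  then have "Cl * levy_exp \<nu> (\<xi> / 2 ^ k) * ((2 ^ k) powr \<alpha> * (2 powr - \<alpha>) ^ k)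
      \<le> levy_exp \<nu> \<xi> * (2 powr - \<alpha>) ^ k"
    by (simp add: mult_right_mono mult_ac)
  then show ?thesis
    using Cl_pos by (simp add: cancel field_simps)
qed

lemma levy_h_le_levy_exp:
  assumes "0 < \<xi>"
  shows "levy_h \<nu> (1 / \<xi>) \<le> levy_h_psi_const \<alpha> Cl * levy_exp \<nu> \<xi>"
proof -
  define q :: real where "q = 2 powr - \<alpha>"
  have q: "0 < q" "q < 1"
    using alpha_pos by (auto simp: q_def powr_less_one)
  have "ennreal (levy_h \<nu> (1 / \<xi>)) \<le> 16 * (\<Sum>k. ennreal (levy_exp \<nu> (\<xi> / 2 ^ k)))"
    using assms by (rule levy_h_le_dyadic_sum)
  also have "\<dots> \<le> 16 * (\<Sum>k. ennreal (levy_exp \<nu> \<xi> / Cl * q ^ k))"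
  proof (intro mult_left_mono suminf_le)
    show "ennreal (levy_exp \<nu> (\<xi> / 2 ^ k)) \<le> ennreal (levy_exp \<nu> \<xi> / Cl * q ^ k)" for k
      unfolding q_def using assms by (intro ennreal_leI levy_exp_div_pow2) simp
  qed (simp_all add: summableI)
  also have "(\<Sum>k. ennreal (levy_exp \<nu> \<xi> / Cl * q ^ k)) = ennreal (levy_exp \<nu> \<xi> / Cl * (1 / (1 - q)))"
    using q Cl_pos levy_exp_nonneg[of \<nu>] density_nonneg
    by (intro suminf_ennreal_eq sums_mult geometric_sums) auto
  also have "16 * ennreal (levy_exp \<nu> \<xi> / Cl * (1 / (1 - q))) = ennreal (16 * (levy_exp \<nu> \<xi> / Cl * (1 / (1 - q))))"
    using q Cl_pos levy_exp_nonneg[of \<nu>] density_nonneg by (intro numeral_mult_ennreal) simp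
  also have "\<dots> = ennreal (levy_h_psi_const \<alpha> Cl * levy_exp \<nu> \<xi>)"
    by (rule arg_cong[where f = ennreal]) (simp add: levy_h_psi_const_def q_def)
  finally show ?thesis
    using levy_h_psi_const_pos levy_exp_nonneg[of \<nu>] density_nonneg by simp
qed

lemma powr_mult_levy_h_le:
  assumes "1 \<le> m"
  shows "Cl * m powr \<alpha> * levy_h \<nu> m \<le> levy_h_psi_const \<alpha> Cl * levy_exp \<nu> 1"
proof -
  have "levy_h \<nu> m \<le> levy_h_psi_const \<alpha> Cl * levy_exp \<nu> (1 / m)"
    using levy_h_le_levy_exp[of "1 / m"] assms by simp
  then have "Cl * m powr \<alpha> * levy_h \<nu> m \<le> Cl * m powr \<alpha> * (levy_h_psi_const \<alpha> Cl * levy_exp \<nu> (1 / m))"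
    using Cl_pos by (intro mult_left_mono) auto
  also have "\<dots> = levy_h_psi_const \<alpha> Cl * (Cl * m powr \<alpha> * levy_exp \<nu> (1 / m))"
    by (simp add: mult_ac)
  also have "\<dots> \<le> levy_h_psi_const \<alpha> Cl * levy_exp \<nu> 1"
    using lower_scaling[of m "1 / m"] assms levy_h_psi_const_pos by (simp add: mult_left_mono)
  finally show ?thesis .
qed

lemma powr_mult_levy_exp_le:
  assumes "1 \<le> l"
  shows "Cl * l powr \<alpha> * levy_exp \<nu> 1 \<le> 2 * levy_h \<nu> (1 / l)"
  using lower_scaling[of l 1] levy_exp_le_levy_h[of l] assms by simp

lemma levy_exp_lower_bound:
  assumes "0 < r" "0 < t" "levy_h \<nu> r = 1 / t" "0 \<le> \<rho>"
  defines "K \<equiv> Cl / levy_h_psi_const \<alpha> Cl"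
  shows "K * (\<rho> * r) powr \<alpha> - K \<le> t * levy_exp \<nu> \<rho>"
proof (cases "1 \<le> \<rho> * r")
  case True
  have "1 / t \<le> levy_h_psi_const \<alpha> Cl * levy_exp \<nu> (1 / r)"
    using levy_h_le_levy_exp[of "1 / r"] assms by simp
  then have "K \<le> Cl * (t * levy_exp \<nu> (1 / r))"
    using assms levy_h_psi_const_pos Cl_pos by (simp add: K_def field_simps)
  then have "K * (\<rho> * r) powr \<alpha> \<le> Cl * (t * levy_exp \<nu> (1 / r)) * (\<rho> * r) powr \<alpha>"
    by (rule mult_right_mono) simp
  then have "K * (\<rho> * r) powr \<alpha> \<le> t * (Cl * (\<rho> * r) powr \<alpha> * levy_exp \<nu> (1 / r))"
    by (simp add: mult_ac)
  also have "\<dots> \<le> t * levy_exp \<nu> \<rho>"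
    using lower_scaling[of "\<rho> * r" "1 / r"] True assms by (simp add: mult_left_mono)
  finally have "K * (\<rho> * r) powr \<alpha> \<le> t * levy_exp \<nu> \<rho>" .
  moreover have "0 < K"
    using Cl_pos levy_h_psi_const_pos by (simp add: K_def)
  ultimately show ?thesis
    by linarith
next
  case False
  then have "(\<rho> * r) powr \<alpha> \<le> 1"
    using powr_mono2[of \<alpha> "\<rho> * r" 1] assms alpha_pos by simp
  moreover have "0 < K"
    using Cl_pos levy_h_psi_const_pos by (simp add: K_def)
  ultimately have "K * (\<rho> * r) powr \<alpha> \<le> K"
    by (simp add: mult_left_le)
  moreover have "0 \<le> t * levy_exp \<nu> \<rho>"
    using assms levy_exp_nonneg[of \<nu>] density_nonneg by simp
  ultimately show ?thesis
    by linarith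
qed

end

lemma le_powr_max_one_root:
  fixes z \<alpha> :: real
  assumes "0 < \<alpha>" "0 \<le> z"
  shows "z \<le> max 1 (z powr (1 / \<alpha>)) powr \<alpha>"
proof -
  have "z = (z powr (1 / \<alpha>)) powr \<alpha>"
    using assms by (simp add: powr_powr)
  also have "\<dots> \<le> max 1 (z powr (1 / \<alpha>)) powr \<alpha>"
    using assms by (intro powr_mono2) auto
  finally show ?thesis .
qed

locale scaling_infinite_levy_density = infinite_levy_density + lower_scaling_levy_density
begin

lemma levy_h_surjective:
  assumes "0 < y"
  shows "\<exists>r>0. levy_h \<nu> r = y"
proof -
  define p where "p = levy_exp \<nu> 1"
  have p: "0 < p"
    unfolding p_def by (rule levy_exp_pos) simp
  define l where "l = max 1 ((2 * y / (Cl * p)) powr (1 / \<alpha>))"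
  have l: "1 \<le> l"
    by (simp add: l_def)
  have "2 * y \<le> Cl * l powr \<alpha> * p"
    using le_powr_max_one_root[OF alpha_pos, of "2 * y / (Cl * p)"] assms Cl_pos p
    by (simp add: l_def field_simps)
  then have small_arg: "y \<le> levy_h \<nu> (1 / l)"
    using powr_mult_levy_exp_le[OF l] by (simp add: p_def)
  define m where "m = max 1 ((levy_h_psi_const \<alpha> Cl * p / (Cl * y)) powr (1 / \<alpha>))"
  have m: "1 \<le> m"
    by (simp add: m_def)
  have "levy_h_psi_const \<alpha> Cl * p \<le> Cl * y * m powr \<alpha>"
    using le_powr_max_one_root[OF alpha_pos, of "levy_h_psi_const \<alpha> Cl * p / (Cl * y)"]
      assms Cl_pos p levy_h_psi_const_pos
    by (simp add: m_def field_simps)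
  then have "Cl * m powr \<alpha> * levy_h \<nu> m \<le> Cl * m powr \<alpha> * y"
    using powr_mult_levy_h_le[OF m] by (simp add: p_def mult_ac)
  then have large_arg: "levy_h \<nu> m \<le> y"
    using Cl_pos m by simp
  have "1 / l \<le> m"
    using levy_h_strict_antimono[of m "1 / l"] small_arg large_arg m by force
  moreover have "\<forall>s. 1 / l \<le> s \<and> s \<le> m \<longrightarrow> isCont (levy_h \<nu>) s"
    using l by (auto intro!: isCont_levy_h simp: less_le_trans[of 0 "1 / l"])
  ultimately obtain r where r: "1 / l \<le> r" "levy_h \<nu> r = y"
    using IVT2[where f = "levy_h \<nu>" and a = "1 / l" and b = m and y = y] large_arg small_arg
    by blast
  moreover have "0 < 1 / l"
    using l by simp
  ultimately have "0 < r"
    by linarith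
  with r(2) show ?thesis
    by blast
qed

lemma
  assumes "0 < y"
  shows levy_h_inv_pos: "0 < levy_h_inv \<nu> y"
    and levy_h_levy_h_inv: "levy_h \<nu> (levy_h_inv \<nu> y) = y"
proof -
  have "\<exists>!r. 0 < r \<and> levy_h \<nu> r = y"
  proof (rule ex_ex1I)
    show "\<exists>r. 0 < r \<and> levy_h \<nu> r = y"
      using levy_h_surjective[OF assms] by blast
    show "r = r'" if "0 < r \<and> levy_h \<nu> r = y" "0 < r' \<and> levy_h \<nu> r' = y" for r r'
      using that levy_h_strict_antimono[of r r'] levy_h_strict_antimono[of r' r]
      by (cases r r' rule: linorder_cases) auto
  qed
  then show "0 < levy_h_inv \<nu> y" "levy_h \<nu> (levy_h_inv \<nu> y) = y"
    unfolding levy_h_inv_def by (metis (mono_tags, lifting) theI')+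
qed

end

lemma borel_measurable_even_differentiable:
  fixes m :: "real \<Rightarrow> real"
  assumes diff: "\<forall>x\<in>{0<..}. m differentiable at x" and even: "\<forall>x. x \<noteq> 0 \<longrightarrow> m (- x) = m x"
  shows "m \<in> borel_measurable borel"
proof (rule borel_measurable_continuous_countable_exceptions[of "{0}"])
  have pos: "continuous_on {0<..} m"
    using diff by (intro differentiable_imp_continuous_on differentiable_at_imp_differentiable_on) auto
  have "continuous_on {..<0} (\<lambda>x. m (- x))"
    by (rule continuous_on_compose2[OF pos]) (auto intro: continuous_intros)
  then have neg: "continuous_on {..<0} m"
    using even by (auto intro: continuous_on_cong[THEN iffD1, rotated 2])
  have "continuous_on ({0<..} \<union> {..<0}) m"
    by (rule continuous_on_open_Un[OF _ _ pos neg]) auto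
  moreover have "{0<..} \<union> {..<0} = - {0::real}"
    by auto
  ultimately show "continuous_on (- {0}) m"
    by simp
qed simp

lemma truncation_family_bounds:
  assumes family: "truncation_family \<nu> \<delta>0 \<mu>" and \<delta>: "\<delta> \<in> {0<..\<delta>0}"
    and \<nu>_nonneg: "\<And>x. 0 \<le> \<nu> x" and \<nu>_even: "\<And>x. \<nu> (- x) = \<nu> x"
  shows "\<mu> \<delta> \<in> borel_measurable borel"
    and "\<And>x. x \<noteq> 0 \<Longrightarrow> 0 \<le> \<mu> \<delta> x \<and> \<mu> \<delta> x \<le> \<nu> x"
    and "\<And>x. x \<noteq> 0 \<Longrightarrow> \<bar>x\<bar> \<le> \<delta> \<Longrightarrow> \<mu> \<delta> x = \<nu> x"
proof -
  have inner: "\<forall>x\<in>{0<..\<delta>}. \<mu> \<delta> x = \<nu> x"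
    and middle: "\<forall>x\<in>{\<delta><..<2*\<delta>}. 0 \<le> \<mu> \<delta> x \<and> \<mu> \<delta> x \<le> \<nu> x"
    and outer: "\<forall>x\<in>{2*\<delta>..}. \<mu> \<delta> x = 0"
    and diff: "\<forall>x\<in>{0<..}. \<mu> \<delta> differentiable at x"
    and even: "\<forall>x. x \<noteq> 0 \<longrightarrow> \<mu> \<delta> (- x) = \<mu> \<delta> x"
    using family \<delta> unfolding truncation_family_def by blast+
  show "\<mu> \<delta> \<in> borel_measurable borel"
    using diff even by (rule borel_measurable_even_differentiable)
  have abs_eq: "\<mu> \<delta> x = \<mu> \<delta> \<bar>x\<bar>" "\<nu> x = \<nu> \<bar>x\<bar>" if "x \<noteq> 0" for x
    using even \<nu>_even that by (auto simp: abs_if)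
  have "0 \<le> \<mu> \<delta> x \<and> \<mu> \<delta> x \<le> \<nu> x" if "0 < x" for x
    using inner middle outer \<nu>_nonneg[of x] that
    by (cases "x \<le> \<delta>"; cases "x < 2 * \<delta>") auto
  then show "0 \<le> \<mu> \<delta> x \<and> \<mu> \<delta> x \<le> \<nu> x" if "x \<noteq> 0" for x
    using that abs_eq[OF that] by simp
  show "\<mu> \<delta> x = \<nu> x" if "x \<noteq> 0" "\<bar>x\<bar> \<le> \<delta>" for x
    using inner that abs_eq[OF that(1)] by simp
qed

context levy_density
begin

lemma levy_exp_le_truncated:
  assumes [measurable]: "g \<in> borel_measurable borel" and "0 < \<delta>"
    and g_bounds: "\<And>x. x \<noteq> 0 \<Longrightarrow> 0 \<le> g x \<and> g x \<le> \<nu> x"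
    and g_eq: "\<And>x. x \<noteq> 0 \<Longrightarrow> \<bar>x\<bar> \<le> \<delta> \<Longrightarrow> g x = \<nu> x"
  shows "levy_exp \<nu> \<xi> \<le> levy_exp g \<xi> + 2 * levy_h \<nu> \<delta>"
proof -
  have integrable_g: "integrable lborel (\<lambda>x. (1 - cos (\<xi> * x)) * g x)"
  proof (rule Bochner_Integration.integrable_bound[OF integrable_levy_exp[of \<xi>]])
    show "AE x in lborel. norm ((1 - cos (\<xi> * x)) * g x) \<le> norm ((1 - cos (\<xi> * x)) * \<nu> x)"
      using AE_lborel_singleton[of 0]
    proof eventually_elim
      case (elim x)
      then have "0 \<le> g x" "g x \<le> \<nu> x"
        using g_bounds by auto
      then show ?case
        by (simp add: abs_mult mult_left_mono)
    qed
  qed simp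
  have "(1 - cos (\<xi> * x)) * \<nu> x \<le> (1 - cos (\<xi> * x)) * g x + 2 * (min 1 (x\<^sup>2 / \<delta>\<^sup>2) * \<nu> x)" for x
  proof (cases "x \<noteq> 0 \<and> \<delta> < \<bar>x\<bar>")
    case False
    then have "(1 - cos (\<xi> * x)) * \<nu> x = (1 - cos (\<xi> * x)) * g x"
      using g_eq by (cases "x = 0") auto
    moreover have "0 \<le> 2 * (min 1 (x\<^sup>2 / \<delta>\<^sup>2) * \<nu> x)"
      using density_nonneg[of x] by simp
    ultimately show ?thesis
      by linarith
  next
    case True
    then have "min 1 (x\<^sup>2 / \<delta>\<^sup>2) = 1"
      using \<open>0 < \<delta>\<close> abs_le_square_iff[of x \<delta>] by (simp add: min_def field_simps)
    moreover have "(1 - cos (\<xi> * x)) * (\<nu> x - g x) \<le> 2 * \<nu> x"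
      using g_bounds[of x] True cos_ge_minus_one[of "\<xi> * x"] density_nonneg[of x]
      by (intro mult_mono) auto
    ultimately show ?thesis
      by (simp add: algebra_simps)
  qed
  then have "levy_exp \<nu> \<xi> \<le> (\<integral>x. (1 - cos (\<xi> * x)) * g x + 2 * (min 1 (x\<^sup>2 / \<delta>\<^sup>2) * \<nu> x) \<partial>lborel)"
    unfolding levy_exp_def using \<open>0 < \<delta>\<close>
    by (intro integral_mono integrable_levy_exp Bochner_Integration.integrable_add integrable_g
        integrable_mult_right integrable_levy_h)
  also have "\<dots> = levy_exp g \<xi> + 2 * levy_h \<nu> \<delta>"
    unfolding levy_exp_def levy_h_def using \<open>0 < \<delta>\<close>
    by (subst Bochner_Integration.integral_add) (auto intro: integrable_g integrable_mult_right integrable_levy_h)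
  finally show ?thesis .
qed

end

lemma exp_neg_mult_power_le_fact:
  fixes y :: real
  assumes "0 \<le> y"
  shows "exp (- y) * y ^ m \<le> fact m"
proof -
  have "sum (\<lambda>n. y ^ n /\<^sub>R fact n) {m} \<le> (\<Sum>n. y ^ n /\<^sub>R fact n)"
    using assms by (intro sum_le_suminf summable_exp_generic) auto
  then have "y ^ m / fact m \<le> exp y"
    by (simp add: exp_def divide_inverse mult.commute)
  then show ?thesis
    by (simp add: exp_minus field_simps)
qed

lemma exp_neg_powr_mult_poly_bounded:
  fixes b \<alpha> :: real
  assumes b: "0 < b" and \<alpha>: "0 < \<alpha>"
  shows "\<exists>C>0. \<forall>w\<ge>0. exp (- (b * w powr \<alpha>)) * (1 + w\<^sup>2) ^ n \<le> C"
proof -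
  define m where "m = nat \<lceil>2 * real n / \<alpha>\<rceil>"
  have "2 * real n / \<alpha> \<le> real m"
    unfolding m_def by (rule real_nat_ceiling_ge)
  then have m: "real (2 * n) \<le> real m * \<alpha>"
    using \<alpha> by (simp add: divide_le_eq)
  define C where "C = 2 ^ n * max 1 (fact m / b ^ m)"
  have "exp (- (b * w powr \<alpha>)) * (1 + w\<^sup>2) ^ n \<le> C" if "0 \<le> w" for w
  proof (cases "w \<le> 1")
    case True
    then have "(1 + w\<^sup>2) ^ n \<le> 2 ^ n"
      using that by (intro power_mono) (auto simp: power_le_one)
    moreover have "exp (- (b * w powr \<alpha>)) \<le> 1"
      using b that by simp
    ultimately have "exp (- (b * w powr \<alpha>)) * (1 + w\<^sup>2) ^ n \<le> 1 * 2 ^ n"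
      by (intro mult_mono) auto
    then show ?thesis
      by (simp add: C_def order_trans[OF _ mult_left_mono[of 1]])
  next
    case False
    have "(1 + w\<^sup>2) ^ n \<le> (2 * w\<^sup>2) ^ n"
      using False by (intro power_mono) (auto simp: power2_eq_square less_1_mult less_imp_le)
    also have "\<dots> = 2 ^ n * w ^ (2 * n)"
      by (simp add: power_mult_distrib power_mult)
    also have "w ^ (2 * n) = w powr real (2 * n)"
      using False by (subst powr_realpow) auto
    also have "2 ^ n * w powr real (2 * n) \<le> 2 ^ n * w powr (real m * \<alpha>)"
      using m False by (intro mult_left_mono powr_mono) auto
    also have "\<dots> = 2 ^ n / b ^ m * (b * w powr \<alpha>) ^ m"
      using b False by (simp add: power_mult_distrib powr_power mult.commute)
    finally have "exp (- (b * w powr \<alpha>)) * (1 + w\<^sup>2) ^ n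
        \<le> exp (- (b * w powr \<alpha>)) * (2 ^ n / b ^ m * (b * w powr \<alpha>) ^ m)"
      by (rule mult_left_mono) simp
    also have "\<dots> = 2 ^ n / b ^ m * (exp (- (b * w powr \<alpha>)) * (b * w powr \<alpha>) ^ m)"
      by (simp only: mult_ac)
    also have "\<dots> \<le> 2 ^ n / b ^ m * fact m"
      using b that by (intro mult_left_mono exp_neg_mult_power_le_fact) auto
    also have "\<dots> = 2 ^ n * (fact m / b ^ m)"
      by simp
    also have "\<dots> \<le> C"
      unfolding C_def by (intro mult_left_mono) simp_all
    finally show ?thesis .
  qed
  moreover have "0 < C"
    by (simp add: C_def)
  ultimately show ?thesis
    by blast
qed

lemma prod_one_plus_sq_inner_le:
  fixes \<eta> :: "'a::euclidean_space"
  shows "(\<Prod>i\<in>Basis. 1 + (\<eta> \<bullet> i)\<^sup>2) \<le> (1 + (norm \<eta>)\<^sup>2) ^ DIM('a)"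
proof -
  have "(\<Prod>i\<in>Basis. 1 + (\<eta> \<bullet> i)\<^sup>2) \<le> (\<Prod>i\<in>(Basis::'a set). 1 + (norm \<eta>)\<^sup>2)"
    using Basis_le_norm abs_le_square_iff by (intro prod_mono) fastforce
  then show ?thesis
    by simp
qed

lemma nn_integral_inverse_one_plus_sq_finite:
  "(\<integral>\<^sup>+ x. ennreal (1 / (1 + x\<^sup>2)) \<partial>lborel) < \<infinity>"
proof -
  have "integrable lborel (\<lambda>x::real. inverse (1 + x ^ 2))"
    using integrable_inverse_1_plus_square by (simp add: set_integrable_def einterval_def)
  then have "integrable lborel (\<lambda>x::real. 1 / (1 + x\<^sup>2))"
    by (simp add: inverse_eq_divide)
  then show ?thesis
    using integrableD(2) by (simp add: less_top)
qed

lemma nn_integral_exp_neg_norm_powr_finite: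
  fixes b \<alpha> :: real
  assumes "0 < b" "0 < \<alpha>"
  shows "(\<integral>\<^sup>+ \<eta>. ennreal (exp (- (b * norm (\<eta>::'a::euclidean_space) powr \<alpha>))) \<partial>lborel) < \<infinity>"
proof -
  obtain C where C: "0 < C" "\<forall>w\<ge>0. exp (- (b * w powr \<alpha>)) * (1 + w\<^sup>2) ^ DIM('a) \<le> C"
    using exp_neg_powr_mult_poly_bounded[OF assms] by blast
  \<comment> \<open>domination by a product of one-dimensional Cauchy densities\<close>
  have pointwise: "exp (- (b * norm \<eta> powr \<alpha>)) \<le> C * (\<Prod>i\<in>Basis. 1 / (1 + (\<eta> \<bullet> i)\<^sup>2))" for \<eta> :: 'a
  proof -
    let ?P = "\<Prod>i\<in>(Basis::'a set). 1 + (\<eta> \<bullet> i)\<^sup>2"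
    have P_pos: "0 < ?P"
      by (intro prod_pos) (auto simp: add_pos_nonneg)
    have "exp (- (b * norm \<eta> powr \<alpha>)) * ?P \<le> exp (- (b * norm \<eta> powr \<alpha>)) * (1 + (norm \<eta>)\<^sup>2) ^ DIM('a)"
      by (intro mult_left_mono prod_one_plus_sq_inner_le) simp
    also have "\<dots> \<le> C"
      using C(2) by simp
    finally show ?thesis
      using P_pos by (simp add: prod_dividef field_simps)
  qed
  have product: "(\<integral>\<^sup>+ \<eta>. (\<Prod>i\<in>Basis. ennreal (1 / (1 + ((\<eta>::'a) \<bullet> i)\<^sup>2))) \<partial>lborel)
      = (\<Prod>i\<in>(Basis::'a set). \<integral>\<^sup>+ x. ennreal (1 / (1 + x\<^sup>2)) \<partial>lborel)"
    by (rule nn_integral_lborel_prod[where f = "\<lambda>_ x. ennreal (1 / (1 + x\<^sup>2))"]) auto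
  have "(\<integral>\<^sup>+ \<eta>. ennreal (exp (- (b * norm (\<eta>::'a) powr \<alpha>))) \<partial>lborel)
      \<le> (\<integral>\<^sup>+ \<eta>. ennreal C * (\<Prod>i\<in>Basis. ennreal (1 / (1 + ((\<eta>::'a) \<bullet> i)\<^sup>2))) \<partial>lborel)"
    using pointwise C(1)
    by (intro nn_integral_mono)
      (simp add: prod_ennreal ennreal_mult'[symmetric] add_pos_nonneg less_imp_le ennreal_leI)
  also have "\<dots> = ennreal C * (\<integral>\<^sup>+ \<eta>. (\<Prod>i\<in>Basis. ennreal (1 / (1 + ((\<eta>::'a) \<bullet> i)\<^sup>2))) \<partial>lborel)"
    by (rule nn_integral_cmult) measurable
  also have "\<dots> = ennreal C * (\<Prod>i\<in>(Basis::'a set). \<integral>\<^sup>+ x. ennreal (1 / (1 + x\<^sup>2)) \<partial>lborel)"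
    by (simp only: product)
  also have "\<dots> < \<infinity>"
    using nn_integral_inverse_one_plus_sq_finite
    by (simp add: ennreal_mult_less_top power_less_top_ennreal)
  finally show ?thesis .
qed

lemma nn_integral_lborel_scaleR:
  fixes G :: "'a::euclidean_space \<Rightarrow> ennreal"
  assumes [measurable]: "G \<in> borel_measurable borel" and "0 < r"
  shows "(\<integral>\<^sup>+ x. G (r *\<^sub>R x) \<partial>lborel) = ennreal (1 / r ^ DIM('a)) * (\<integral>\<^sup>+ x. G x \<partial>lborel)"
proof -
  have "(\<integral>\<^sup>+ x. G x \<partial>lborel) = ennreal (r ^ DIM('a)) * (\<integral>\<^sup>+ x. G (r *\<^sub>R x) \<partial>lborel)"
    using \<open>0 < r\<close> by (subst lborel_affine[of r 0]) (simp_all add: nn_integral_density nn_integral_distr nn_integral_cmult)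
  moreover have "ennreal (1 / r ^ DIM('a)) * ennreal (r ^ DIM('a)) = 1"
    using \<open>0 < r\<close> by (simp add: ennreal_mult[symmetric])
  ultimately show ?thesis
    by (simp add: mult.assoc[symmetric])
qed

context lower_scaling_levy_density
begin

lemma exp_neg_truncated_le:
  assumes "0 < r" "0 < t" "levy_h \<nu> r = 1 / t" "0 \<le> \<rho>"
    and "0 \<le> P" "0 \<le> H" "levy_exp \<nu> \<rho> \<le> P + 2 * H"
  defines "K \<equiv> Cl / levy_h_psi_const \<alpha> Cl"
  shows "exp (- t * P) \<le> exp (t * H + K) * exp (- (K / 2 * (\<rho> * r) powr \<alpha>))"
proof -
  have "K * (\<rho> * r) powr \<alpha> - K \<le> t * levy_exp \<nu> \<rho>"
    unfolding K_def by (rule levy_exp_lower_bound[OF assms(1-4)])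
  moreover have "t * levy_exp \<nu> \<rho> \<le> t * P + 2 * (t * H)"
    using mult_left_mono[OF assms(7), of t] assms(2) by (simp add: algebra_simps)
  moreover have "0 \<le> t * P" "0 < K"
    using assms(2,5) Cl_pos levy_h_psi_const_pos by (simp_all add: K_def)
  \<comment> \<open>\<open>t P\<close> dominates both \<open>0\<close> and \<open>K (\<rho> r)^\<alpha> - K - 2 t H\<close>, hence also their mean\<close>
  ultimately have "- t * P \<le> t * H + K - K / 2 * (\<rho> * r) powr \<alpha>"
    by linarith
  then have "exp (- t * P) \<le> exp (t * H + K - K / 2 * (\<rho> * r) powr \<alpha>)"
    by simp
  also have "\<dots> = exp (t * H + K) * exp (- (K / 2 * (\<rho> * r) powr \<alpha>))"
    by (simp add: exp_add[symmetric])
  finally show ?thesis .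
qed

end

context scaling_infinite_levy_density
begin

lemma nn_integral_exp_neg_truncated_le:
  fixes g :: "real \<Rightarrow> real"
  assumes [measurable]: "g \<in> borel_measurable borel" and "0 < \<delta>" "0 < t"
    and g_bounds: "\<And>x. x \<noteq> 0 \<Longrightarrow> 0 \<le> g x \<and> g x \<le> \<nu> x"
    and g_eq: "\<And>x. x \<noteq> 0 \<Longrightarrow> \<bar>x\<bar> \<le> \<delta> \<Longrightarrow> g x = \<nu> x"
  defines "K \<equiv> Cl / levy_h_psi_const \<alpha> Cl"
  shows "(\<integral>\<^sup>+ \<xi>. ennreal (exp (- t * levy_exp g (norm (\<xi>::'a::euclidean_space)))) \<partial>lborel)
    \<le> ennreal (exp K * enn2real (\<integral>\<^sup>+ \<eta>. ennreal (exp (- (K / 2 * norm (\<eta>::'a) powr \<alpha>))) \<partial>lborel)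
          * exp (levy_h \<nu> \<delta> * t) / levy_h_inv \<nu> (1 / t) ^ DIM('a))"
proof -
  define r where "r = levy_h_inv \<nu> (1 / t)"
  have r: "0 < r" "levy_h \<nu> r = 1 / t"
    using levy_h_inv_pos[of "1 / t"] levy_h_levy_h_inv[of "1 / t"] \<open>0 < t\<close> by (simp_all add: r_def)
  define G where "G \<eta> = ennreal (exp (- (K / 2 * norm (\<eta>::'a) powr \<alpha>)))" for \<eta>
  have K: "0 < K"
    using Cl_pos levy_h_psi_const_pos by (simp add: K_def)
  have [measurable]: "G \<in> borel_measurable borel"
    unfolding G_def by measurable
  have "(\<integral>\<^sup>+ \<eta>. G \<eta> \<partial>lborel) < \<infinity>"
    unfolding G_def using K alpha_pos by (intro nn_integral_exp_neg_norm_powr_finite) auto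
  then have G_finite: "(\<integral>\<^sup>+ \<eta>. G \<eta> \<partial>lborel) = ennreal (enn2real (\<integral>\<^sup>+ \<eta>. G \<eta> \<partial>lborel))"
    by simp
  have "ennreal (exp (- t * levy_exp g (norm \<xi>))) \<le> ennreal (exp (t * levy_h \<nu> \<delta> + K)) * G (r *\<^sub>R \<xi>)"
    for \<xi> :: 'a
  proof -
    have "exp (- t * levy_exp g (norm \<xi>))
        \<le> exp (t * levy_h \<nu> \<delta> + K) * exp (- (K / 2 * (norm \<xi> * r) powr \<alpha>))"
      unfolding K_def
      using levy_exp_le_truncated[OF assms(1,2) g_bounds g_eq] g_bounds
      by (intro exp_neg_truncated_le r \<open>0 < t\<close> levy_exp_nonneg levy_h_nonneg) auto
    then show ?thesis
      using r by (simp add: G_def ennreal_mult'[symmetric] mult.commute)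
  qed
  then have "(\<integral>\<^sup>+ \<xi>. ennreal (exp (- t * levy_exp g (norm (\<xi>::'a)))) \<partial>lborel)
      \<le> (\<integral>\<^sup>+ \<xi>. ennreal (exp (t * levy_h \<nu> \<delta> + K)) * G (r *\<^sub>R \<xi>) \<partial>lborel)"
    by (intro nn_integral_mono)
  also have "\<dots> = ennreal (exp (t * levy_h \<nu> \<delta> + K)) * ennreal (1 / r ^ DIM('a)) * (\<integral>\<^sup>+ \<eta>. G \<eta> \<partial>lborel)"
    using r by (simp add: nn_integral_cmult nn_integral_lborel_scaleR mult.assoc)
  also have "\<dots> = ennreal (exp K * enn2real (\<integral>\<^sup>+ \<eta>. G \<eta> \<partial>lborel) * exp (levy_h \<nu> \<delta> * t) / r ^ DIM('a))"
    using r by (subst G_finite) (simp add: ennreal_mult[symmetric] exp_add field_simps)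
  finally show ?thesis
    unfolding r_def G_def .
qed

end

lemma scaling_infinite_levy_density_if_std_levy_assms:
  assumes "std_levy_assms \<nu> \<eta>4 \<alpha> \<beta> Cl Cu"
  shows "scaling_infinite_levy_density \<nu> \<alpha> Cl"
  by unfold_locales (use assms in \<open>auto simp: std_levy_assms_def\<close>)

theorem lemma2p5:
  fixes \<alpha> C1 :: real
  shows "\<exists>c::real. \<forall>\<nu> \<eta>4 \<beta> Cu \<delta>0 \<mu>.
     std_levy_assms \<nu> \<eta>4 \<alpha> \<beta> (C1 * pi\<^sup>2) Cu \<and> truncation_family \<nu> \<delta>0 \<mu> \<longrightarrow>
     (\<forall>\<delta>\<in>{0<..\<delta>0}. \<forall>t>0.
        (\<integral>\<^sup>+ \<xi>. ennreal (exp (- t * levy_exp (\<mu> \<delta>) (norm (\<xi> :: real ^ 'n)))) \<partial>lborel)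
          \<le> ennreal (c * exp (levy_h \<nu> \<delta> * t) / (levy_h_inv \<nu> (1 / t)) ^ CARD('n)))"
proof -
  define K where "K = C1 * pi\<^sup>2 / levy_h_psi_const \<alpha> (C1 * pi\<^sup>2)"
  define c where "c = exp K * enn2real (\<integral>\<^sup>+ \<eta>. ennreal (exp (- (K / 2 * norm (\<eta>::real ^ 'n) powr \<alpha>))) \<partial>lborel)"
  show ?thesis
  proof (intro exI[of _ c] allI impI ballI)
    fix \<nu> \<eta>4 \<beta> Cu \<delta>0 \<mu> \<delta> and t :: real
    assume std_family: "std_levy_assms \<nu> \<eta>4 \<alpha> \<beta> (C1 * pi\<^sup>2) Cu \<and> truncation_family \<nu> \<delta>0 \<mu>"
      and \<delta>: "\<delta> \<in> {0<..\<delta>0}" and "0 < t"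
    interpret scaling_infinite_levy_density \<nu> \<alpha> "C1 * pi\<^sup>2"
      using std_family by (blast intro: scaling_infinite_levy_density_if_std_levy_assms)
    have "\<nu> (- x) = \<nu> x" for x
      using std_family by (simp add: std_levy_assms_def)
    note bounds = truncation_family_bounds[OF conjunct2[OF std_family] \<delta> density_nonneg this]
    show "(\<integral>\<^sup>+ \<xi>. ennreal (exp (- t * levy_exp (\<mu> \<delta>) (norm (\<xi> :: real ^ 'n)))) \<partial>lborel)
          \<le> ennreal (c * exp (levy_h \<nu> \<delta> * t) / (levy_h_inv \<nu> (1 / t)) ^ CARD('n))"
      using nn_integral_exp_neg_truncated_le[where 'a = "real ^ 'n", OF bounds(1) _ \<open>0 < t\<close> bounds(2,3)] \<delta>
      unfolding c_def K_def by simp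
  qed
qed

end
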